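(* Let $\Omega$, $B$, $B^+$, $Z$, $B_Z$, $\mathcal{P}_Z$ and $G$ be as in the context, and let $\alpha:\mathcal{P}_Z\to\mathbb{R}_+\cup\{+\infty\}$ satisfy (A1) $\inf_{\mathbb{P}\in\mathcal{P}_Z}\alpha(\mathbb{P})=0$, and (A2) $\alpha(\mathbb{P})\ge\mathbb{E}^{\mathbb{P}}\beta(Z)$ for all $\mathbb{P}\in\mathcal{P}_Z$, where $\beta:[1,\infty)\to\mathbb{R}$ is an increasing function (i.e. $\beta(x)\ge\beta(y)$ for $x\ge y$) with $\lim_{x\to\infty}\beta(x)/x=+\infty$. Let $A=\{X\in B_Z:\mathbb{E}^{\mathbb{P}}X+\alpha(\mathbb{P})\ge0\text{ for all }\mathbb{P}\in\mathcal{P}_Z\}+B^+$. Then for every $n\in\mathbb{N}$ there exists $z\in\mathbb{R}_+$ such that $n(Z-z)^+-\frac1n\in G-A$.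
   Context: Fix integers $J\ge0$, $T\ge1$. $\Omega$ is a non-empty subset of $((0,\infty)\times\mathbb{R}^J)^T$, endowed with the Euclidean metric. $B$ is the space of all Borel measurable functions $X:\Omega\to\mathbb{R}$ and $B^+=\{X\in B:X\ge0\}$. $Z:\Omega\to[1,\infty)$ is a continuous function such that $\{\omega\in\Omega:Z(\omega)\le z\}$ is compact for every $z\in\mathbb{R}_+$. $B_Z$ is the set of $X\in B$ with $X/Z$ bounded, and $\mathcal{P}_Z$ the set of Borel probability measures $\mathbb{P}$ on $\Omega$ with $\mathbb{E}^{\mathbb{P}}Z<\infty$. $G\subseteq B$ is a set with $0\in G$. $G-A=\{g-a:g\in G,a\in A\}$; sums of sets are Minkowski sums. The convention $x+(+\infty)=+\infty$ is used. *)

theory Defs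
  imports "HOL-Probability.Probability"
begin

text \<open>Points of Omega are elements of ((0,inf) x R^J)^T, modelled as (real^'k)^'t with
  CARD('k) = J+1 and a distinguished coordinate k0 (the (0,inf)-component), CARD('t) = T.\<close>

definition BB :: "('a::topological_space) set \<Rightarrow> ('a \<Rightarrow> real) set" where
  "BB \<Omega> = {X. X \<in> borel_measurable (restrict_space borel \<Omega>)}"

definition BBplus :: "('a::topological_space) set \<Rightarrow> ('a \<Rightarrow> real) set" where
  "BBplus \<Omega> = {X \<in> BB \<Omega>. \<forall>\<omega>\<in>\<Omega>. X \<omega> \<ge> 0}"

definition BB_Z :: "('a::topological_space) set \<Rightarrow> ('a \<Rightarrow> real) \<Rightarrow> ('a \<Rightarrow> real) set" where
  "BB_Z \<Omega> Z = {X \<in> BB \<Omega>. \<exists>c. \<forall>\<omega>\<in>\<Omega>. \<bar>X \<omega> / Z \<omega>\<bar> \<le> c}"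

definition PP_Z :: "('a::topological_space) set \<Rightarrow> ('a \<Rightarrow> real) \<Rightarrow> 'a measure set" where
  "PP_Z \<Omega> Z = {P. sets P = sets (restrict_space borel \<Omega>) \<and> prob_space P \<and>
                    (\<integral>\<^sup>+\<omega>. ennreal (Z \<omega>) \<partial>P) < \<infinity>}"

definition eexp :: "'a measure \<Rightarrow> ('a \<Rightarrow> real) \<Rightarrow> ereal" where
  "eexp P f = enn2ereal (\<integral>\<^sup>+\<omega>. ennreal (f \<omega>) \<partial>P) - enn2ereal (\<integral>\<^sup>+\<omega>. ennreal (- f \<omega>) \<partial>P)"

definition A0 :: "('a::topological_space) set \<Rightarrow> ('a \<Rightarrow> real) \<Rightarrow> ('a measure \<Rightarrow> ereal) \<Rightarrow> ('a \<Rightarrow> real) set" where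
  "A0 \<Omega> Z \<alpha> = {X \<in> BB_Z \<Omega> Z. \<forall>P\<in>PP_Z \<Omega> Z. ereal (integral\<^sup>L P X) + \<alpha> P \<ge> 0}"

definition in_G_minus_A :: "('a::topological_space) set \<Rightarrow> ('a \<Rightarrow> real) \<Rightarrow> ('a measure \<Rightarrow> ereal)
     \<Rightarrow> ('a \<Rightarrow> real) set \<Rightarrow> ('a \<Rightarrow> real) \<Rightarrow> bool" where
  "in_G_minus_A \<Omega> Z \<alpha> G f \<longleftrightarrow>
     (\<exists>g\<in>G. \<exists>Y\<in>A0 \<Omega> Z \<alpha>. \<exists>W\<in>BBplus \<Omega>. \<forall>\<omega>\<in>\<Omega>. f \<omega> = g \<omega> - (Y \<omega> + W \<omega>))"

end

theory Submission
  imports Defs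
begin

text \<open>Choose \<open>z\<close> so large that \<open>\<beta>(x) \<ge> K x\<close> beyond \<open>z\<close>, with \<open>K \<approx> n + n\<^sup>2 |\<beta>(1)|\<close>.
  Then \<open>Y = 1/n - n(Z - z)\<^sup>+\<close> lies in the acceptance set: for every \<open>P\<close>, writing
  \<open>e = E\<^sup>P (Z - z)\<^sup>+\<close>, either \<open>n e \<le> 1/n\<close> and \<open>E\<^sup>P Y \<ge> 0\<close> already, or \<open>n\<^sup>2 e \<ge> 1\<close> and the penalty
  \<open>\<alpha>(P) \<ge> E\<^sup>P \<beta>(Z) \<ge> K e - |\<beta>(1)|\<close> outweighs \<open>n e\<close>. Hence \<open>n(Z - z)\<^sup>+ - 1/n = 0 - Y\<close> with
  \<open>0 \<in> G\<close>.\<close>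

lemma superlinear_eventually_ge_linear:
  fixes \<beta> :: "real \<Rightarrow> real"
  assumes "filterlim (\<lambda>x. \<beta> x / x) at_top at_top"
  obtains z where "z \<ge> 1" "\<And>x. x \<ge> z \<Longrightarrow> K * x \<le> \<beta> x"
proof -
  have "\<forall>\<^sub>F x in at_top. K \<le> \<beta> x / x"
    using assms by (simp add: filterlim_at_top)
  then obtain N where N: "\<And>x. x \<ge> N \<Longrightarrow> K \<le> \<beta> x / x"
    by (auto simp: eventually_at_top_linorder)
  show thesis
  proof
    fix x assume "x \<ge> max N 1"
    with N[of x] show "K * x \<le> \<beta> x" by (simp add: field_simps)
  qed simp
qed

lemma PP_Z_D:
  assumes "P \<in> PP_Z \<Omega> Z"
  shows "prob_space P" and "space P = \<Omega>"
    and "borel_measurable P = borel_measurable (restrict_space borel \<Omega>)"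
    and "(\<integral>\<^sup>+\<omega>. ennreal (Z \<omega>) \<partial>P) < \<infinity>"
proof -
  have sets: "sets P = sets (restrict_space borel \<Omega>)"
    using assms by (simp add: PP_Z_def)
  show "space P = \<Omega>"
    using sets_eq_imp_space_eq[OF sets] by (simp add: space_restrict_space)
  show "borel_measurable P = borel_measurable (restrict_space borel \<Omega>)"
    by (rule measurable_cong_sets[OF sets refl])
qed (use assms in \<open>auto simp: PP_Z_def\<close>)

lemma PP_Z_integrable_dominated:
  assumes P: "P \<in> PP_Z \<Omega> Z"
    and h: "h \<in> borel_measurable (restrict_space borel \<Omega>)"
    and bound: "\<And>\<omega>. \<omega> \<in> \<Omega> \<Longrightarrow> \<bar>h \<omega>\<bar> \<le> Z \<omega>"
  shows "integrable P h"
proof -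
  have "(\<integral>\<^sup>+\<omega>. ennreal (norm (h \<omega>)) \<partial>P) \<le> (\<integral>\<^sup>+\<omega>. ennreal (Z \<omega>) \<partial>P)"
    using bound PP_Z_D(2)[OF P] by (intro nn_integral_mono ennreal_leI) simp
  then show ?thesis
    using PP_Z_D(3,4)[OF P] h by (auto simp: integrable_iff_bounded)
qed

lemma BB_Z_intro:
  assumes "X \<in> BB \<Omega>" and "\<And>\<omega>. \<omega> \<in> \<Omega> \<Longrightarrow> \<bar>X \<omega>\<bar> \<le> c * Z \<omega>"
    and "\<And>\<omega>. \<omega> \<in> \<Omega> \<Longrightarrow> Z \<omega> > 0"
  shows "X \<in> BB_Z \<Omega> Z"
proof -
  have "\<bar>X \<omega> / Z \<omega>\<bar> \<le> c" if "\<omega> \<in> \<Omega>" for \<omega>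
    using assms(2,3)[OF that] by (simp add: abs_div pos_divide_le_eq)
  with assms(1) show ?thesis
    unfolding BB_Z_def by blast
qed

lemma eexp_ge_integral_minus:
  assumes "prob_space P" and "integrable P g"
    and "\<And>\<omega>. \<omega> \<in> space P \<Longrightarrow> 0 \<le> g \<omega> \<and> g \<omega> \<le> max 0 (f \<omega>)"
    and "\<And>\<omega>. \<omega> \<in> space P \<Longrightarrow> - c \<le> f \<omega>" and "c \<ge> 0"
  shows "ereal (integral\<^sup>L P g - c) \<le> eexp P f"
proof -
  have "ennreal (integral\<^sup>L P g) = (\<integral>\<^sup>+\<omega>. ennreal (g \<omega>) \<partial>P)"
    using assms(2,3) by (intro nn_integral_eq_integral[symmetric]) auto
  also have "\<dots> \<le> (\<integral>\<^sup>+\<omega>. ennreal (f \<omega>) \<partial>P)"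
  proof (intro nn_integral_mono)
    fix \<omega> assume "\<omega> \<in> space P"
    with assms(3) have "0 \<le> g \<omega>" "g \<omega> \<le> max 0 (f \<omega>)" by auto
    then show "ennreal (g \<omega>) \<le> ennreal (f \<omega>)"
      by (cases "f \<omega> \<ge> 0") (auto intro: ennreal_leI)
  qed
  finally have pos: "ereal (integral\<^sup>L P g) \<le> enn2ereal (\<integral>\<^sup>+\<omega>. ennreal (f \<omega>) \<partial>P)"
    using integral_nonneg_AE[of g P] assms(3)
    by (simp add: less_eq_ennreal.rep_eq enn2ereal_ennreal)
  have "(\<integral>\<^sup>+\<omega>. ennreal (- f \<omega>) \<partial>P) \<le> (\<integral>\<^sup>+\<omega>. ennreal c \<partial>P)"
    using assms(4) by (intro nn_integral_mono ennreal_leI) force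
  also have "\<dots> = ennreal c"
    using prob_space.emeasure_space_1[OF assms(1)] by simp
  finally have neg: "enn2ereal (\<integral>\<^sup>+\<omega>. ennreal (- f \<omega>) \<partial>P) \<le> ereal c"
    using assms(5) by (simp add: less_eq_ennreal.rep_eq enn2ereal_ennreal)
  show ?thesis
    unfolding eexp_def using ereal_minus_mono[OF pos neg] by simp
qed

lemma small_or_penalized:
  fixes n e c a K :: real
  assumes "n > 0" "e \<ge> 0" "c \<ge> 0" "K \<ge> n + c * n\<^sup>2"
    and "a \<ge> 0" "a \<ge> K * e - c"
  shows "1 / n - n * e + a \<ge> 0"
proof (cases "n * e \<le> 1 / n")
  case False
  then have "1 \<le> n\<^sup>2 * e"
    using assms(1) by (simp add: field_simps power2_eq_square)
  then have "c \<le> c * (n\<^sup>2 * e)"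
    using assms(3) mult_left_mono[of 1 "n\<^sup>2 * e" c] by simp
  moreover have "n * e + c * (n\<^sup>2 * e) \<le> K * e"
    using mult_right_mono[OF assms(4,2)] by (simp add: algebra_simps)
  moreover have "0 < 1 / n"
    using assms(1) by simp
  ultimately show ?thesis
    using assms(6) by linarith
qed (use assms in linarith)

lemma shortfall_in_BB_Z:
  fixes n :: nat
  assumes n: "n \<ge> 1"
    and Z_meas: "Z \<in> borel_measurable (restrict_space borel \<Omega>)"
    and Z_ge1: "\<And>\<omega>. \<omega> \<in> \<Omega> \<Longrightarrow> Z \<omega> \<ge> 1"
    and z: "z \<ge> 0"
  shows "(\<lambda>\<omega>. 1 / real n - real n * max 0 (Z \<omega> - z)) \<in> BB_Z \<Omega> Z"
proof (rule BB_Z_intro)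
  show "(\<lambda>\<omega>. 1 / real n - real n * max 0 (Z \<omega> - z)) \<in> BB \<Omega>"
    unfolding BB_def mem_Collect_eq using Z_meas by measurable
next
  fix \<omega> assume \<omega>: "\<omega> \<in> \<Omega>"
  have "real n * max 0 (Z \<omega> - z) \<le> real n * Z \<omega>" "0 \<le> real n * max 0 (Z \<omega> - z)"
    using Z_ge1[OF \<omega>] z by (simp_all add: mult_left_mono)
  moreover have "1 / real n \<le> 1 / real n * Z \<omega>" "0 \<le> 1 / real n"
    using Z_ge1[OF \<omega>] by (simp_all add: divide_right_mono)
  ultimately show "\<bar>1 / real n - real n * max 0 (Z \<omega> - z)\<bar> \<le> (1 / real n + real n) * Z \<omega>"
    unfolding distrib_right by (intro abs_leI; linarith)
qed (use Z_ge1 in force)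

lemma shortfall_in_A0:
  fixes n :: nat
  assumes n: "n \<ge> 1"
    and Z_meas: "Z \<in> borel_measurable (restrict_space borel \<Omega>)"
    and Z_ge1: "\<And>\<omega>. \<omega> \<in> \<Omega> \<Longrightarrow> Z \<omega> \<ge> 1"
    and alpha_nonneg: "\<And>P. P \<in> PP_Z \<Omega> Z \<Longrightarrow> \<alpha> P \<ge> 0"
    and alpha_ge: "\<And>P. P \<in> PP_Z \<Omega> Z \<Longrightarrow> \<alpha> P \<ge> eexp P (\<lambda>\<omega>. \<beta> (Z \<omega>))"
    and beta_mono: "mono_on {1..} \<beta>"
    and z: "z \<ge> 1" "\<And>x. x \<ge> z \<Longrightarrow> (real n + \<bar>\<beta> 1\<bar> * (real n)\<^sup>2) * x \<le> \<beta> x"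
  shows "(\<lambda>\<omega>. 1 / real n - real n * max 0 (Z \<omega> - z)) \<in> A0 \<Omega> Z \<alpha>"
proof -
  define K where "K = real n + \<bar>\<beta> 1\<bar> * (real n)\<^sup>2"
  define h where "h = (\<lambda>\<omega>. max 0 (Z \<omega> - z))"
  have K0: "K \<ge> 0" by (simp add: K_def)
  have h_meas: "h \<in> borel_measurable (restrict_space borel \<Omega>)"
    unfolding h_def using Z_meas by measurable
  have h_bound: "0 \<le> h \<omega> \<and> h \<omega> \<le> Z \<omega>" if "\<omega> \<in> \<Omega>" for \<omega>
    using Z_ge1[OF that] z(1) by (auto simp: h_def)
  have Kh_le_beta: "0 \<le> K * h \<omega> \<and> K * h \<omega> \<le> max 0 (\<beta> (Z \<omega>))" if "\<omega> \<in> \<Omega>" for \<omega>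
  proof (cases "Z \<omega> \<ge> z")
    case True
    then have "K * h \<omega> \<le> K * Z \<omega>"
      using h_bound[OF that] K0 by (intro mult_left_mono) auto
    then show ?thesis
      using z(2)[OF True] K0 h_bound[OF that] by (auto simp: K_def)
  qed (simp add: h_def)
  have beta_ge: "- \<bar>\<beta> 1\<bar> \<le> \<beta> (Z \<omega>)" if "\<omega> \<in> \<Omega>" for \<omega>
    using mono_onD[OF beta_mono, of 1 "Z \<omega>"] Z_ge1[OF that] by auto
  show ?thesis
    unfolding A0_def
  proof (intro CollectI conjI ballI)
    show "(\<lambda>\<omega>. 1 / real n - real n * max 0 (Z \<omega> - z)) \<in> BB_Z \<Omega> Z"
      using shortfall_in_BB_Z[OF n Z_meas Z_ge1] z(1) by simp
  next
    fix P assume P: "P \<in> PP_Z \<Omega> Z"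
    note ps = PP_Z_D(1)[OF P] and space = PP_Z_D(2)[OF P]
    have h_int: "integrable P h"
      using PP_Z_integrable_dominated[OF P h_meas] h_bound by auto
    define e where "e = integral\<^sup>L P h"
    have e0: "e \<ge> 0"
      unfolding e_def by (rule integral_nonneg_AE) (auto simp: h_def)
    have "ereal (K * e - \<bar>\<beta> 1\<bar>) \<le> eexp P (\<lambda>\<omega>. \<beta> (Z \<omega>))"
      using eexp_ge_integral_minus[OF ps, of "\<lambda>\<omega>. K * h \<omega>"] h_int Kh_le_beta beta_ge space
      by (simp add: e_def)
    then have alpha: "ereal (K * e - \<bar>\<beta> 1\<bar>) \<le> \<alpha> P" "0 \<le> \<alpha> P"
      using alpha_ge[OF P] alpha_nonneg[OF P] by auto
    have "integral\<^sup>L P (\<lambda>\<omega>. 1 / real n - real n * h \<omega>) = 1 / real n - real n * e"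
      using h_int prob_space.prob_space[OF ps] prob_space.finite_measure[OF ps]
      by (simp add: e_def finite_measure.integrable_const)
    moreover have "1 / real n - real n * e + a \<ge> 0" if "a \<ge> 0" "a \<ge> K * e - \<bar>\<beta> 1\<bar>" for a
      using small_or_penalized[of "real n" e "\<bar>\<beta> 1\<bar>" K a] n e0 that by (simp add: K_def)
    ultimately show "0 \<le> ereal (integral\<^sup>L P (\<lambda>\<omega>. 1 / real n - real n * max 0 (Z \<omega> - z))) + \<alpha> P"
      using alpha by (cases "\<alpha> P") (auto simp: h_def)
  qed
qed

lemma in_G_minus_A_if_neg_in_A0:
  assumes "g \<in> G" "\<And>\<omega>. \<omega> \<in> \<Omega> \<Longrightarrow> g \<omega> = 0" and "(\<lambda>\<omega>. - f \<omega>) \<in> A0 \<Omega> Z \<alpha>"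
  shows "in_G_minus_A \<Omega> Z \<alpha> G f"
proof -
  have "(\<lambda>_. 0) \<in> BBplus \<Omega>" by (simp add: BBplus_def BB_def)
  then show ?thesis
    unfolding in_G_minus_A_def
    by (intro bexI[OF _ assms(1)] bexI[OF _ assms(3)] bexI[of _ "\<lambda>_. 0"]) (simp_all add: assms(2))
qed

theorem proposition2p2:
  fixes \<Omega> :: "((real^'k)^'t) set"
    and k0 :: 'k
    and Z :: "(real^'k)^'t \<Rightarrow> real"
    and G :: "((real^'k)^'t \<Rightarrow> real) set"
    and \<alpha> :: "((real^'k)^'t) measure \<Rightarrow> ereal"
    and \<beta> :: "real \<Rightarrow> real"
  assumes Omega_ne: "\<Omega> \<noteq> {}"
    and Omega_sub: "\<forall>\<omega>\<in>\<Omega>. \<forall>t. \<omega> $ t $ k0 > 0"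
    and Z_cont: "continuous_on \<Omega> Z"
    and Z_ge1: "\<forall>\<omega>\<in>\<Omega>. Z \<omega> \<ge> 1"
    and Z_compact: "\<forall>z\<ge>0. compact {\<omega>\<in>\<Omega>. Z \<omega> \<le> z}"
    and G_sub: "G \<subseteq> BB \<Omega>"
    and G_zero: "\<exists>g\<in>G. \<forall>\<omega>\<in>\<Omega>. g \<omega> = 0"
    and alpha_nonneg: "\<forall>P\<in>PP_Z \<Omega> Z. \<alpha> P \<ge> 0"
    and A1: "(INF P\<in>PP_Z \<Omega> Z. \<alpha> P) = 0"
    and beta_mono: "mono_on {1..} \<beta>"
    and beta_lim: "filterlim (\<lambda>x. \<beta> x / x) at_top at_top"
    and A2: "\<forall>P\<in>PP_Z \<Omega> Z. \<alpha> P \<ge> eexp P (\<lambda>\<omega>. \<beta> (Z \<omega>))"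
  shows "\<forall>n::nat. n \<ge> 1 \<longrightarrow> (\<exists>z::real. z \<ge> 0 \<and>
           in_G_minus_A \<Omega> Z \<alpha> G (\<lambda>\<omega>. real n * max 0 (Z \<omega> - z) - 1 / real n))"
proof (intro allI impI)
  fix n :: nat assume n: "n \<ge> 1"
  obtain z where z: "z \<ge> 1" "\<And>x. x \<ge> z \<Longrightarrow> (real n + \<bar>\<beta> 1\<bar> * (real n)\<^sup>2) * x \<le> \<beta> x"
    using superlinear_eventually_ge_linear[OF beta_lim] by blast
  have Z_meas: "Z \<in> borel_measurable (restrict_space borel \<Omega>)"
    using Z_cont borel_measurable_continuous_on_restrict by blast
  have "(\<lambda>\<omega>. 1 / real n - real n * max 0 (Z \<omega> - z)) \<in> A0 \<Omega> Z \<alpha>"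
    using shortfall_in_A0[OF n Z_meas _ _ _ beta_mono z] Z_ge1 alpha_nonneg A2 by blast
  moreover obtain g where "g \<in> G" "\<forall>\<omega>\<in>\<Omega>. g \<omega> = 0"
    using G_zero by blast
  ultimately have "in_G_minus_A \<Omega> Z \<alpha> G (\<lambda>\<omega>. real n * max 0 (Z \<omega> - z) - 1 / real n)"
    by (intro in_G_minus_A_if_neg_in_A0[of g]) auto
  with z(1) show "\<exists>z::real. z \<ge> 0 \<and> in_G_minus_A \<Omega> Z \<alpha> G (\<lambda>\<omega>. real n * max 0 (Z \<omega> - z) - 1 / real n)"
    by (intro exI[of _ z]) simp
qed

end
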